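(* Let $\tilde\partial$ be a quasi-elementary $M_{A,B}$-differential with associated sets $P,Q,R\subset B$ and $X,Y,Z\subset A\setminus B$. (a) If $q\in Q$, $r\in R$, $y\in Y$, $z\in Z$ satisfy $\tilde\partial(q)=r$ and $\tilde\partial_{A\setminus B}(y)=z$, then $\langle\tilde\partial(y),q\rangle=-\langle\tilde\partial(z),r\rangle$. (b) If $y\in Y$, $z\in Z$ satisfy $\tilde\partial_{A\setminus B}(y)=z$ and $b\in B$ appears in $\tilde\partial(z)$, then $b\in R$ and there exists $q\in Q$ with $\tilde\partial(q)=b$ such that $q$ appears in $\tilde\partial(y)$.
   Context: $\mathbb E$ a field; $A=\{a_1\prec\dots\prec a_N\}$ a finite linearly ordered graded set; $\mathbb E(A)$ the graded vector space with basis $A$; $\langle\cdot,\cdot\rangle$ the scalar product with $\langle a_i,a_j\rangle=\delta_{ij}$. An $M$-differential is a degree $-1$ map $\partial$ with $\partial^2=0$, $\partial(a_i)\in\mathrm{span}\{a_1,\dots,a_{i-1}\}$. For $B\subset A$ with $\partial\mathbb E(B)\subset\mathbb E(B)$ it is an $M_{A,B}$-differential; $\partial_B$ denotes its restriction to $\mathbb E(B)$ and $\partial_{A\setminus B}$ the induced differential on $\mathbb E(A)/\mathbb E(B)$, identified with $\mathbb E(A\setminus B)$. An $M$-differential is elementary if every basis element maps to $0$ or to a single basis element and no two basis elements map to the same basis element. For $\partial$ with $\partial_B$, $\partial_{A\setminus B}$ elementary: $Q=\{b\in B:\partial_Bb\ne0\}$, $R=\partial_B(Q)$, $P=B\setminus(Q\cup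 R)$, $Y=\{a\in A\setminus B:\partial_{A\setminus B}a\ne0\}$, $Z=\partial_{A\setminus B}(Y)$, $X$ the rest of $A\setminus B$. A vector $v$ contains (or $a$ appears in $v$) $a\in A$ if $\langle v,a\rangle\ne0$. $\partial$ is quasi-elementary if $\partial_B,\partial_{A\setminus B}$ are elementary, each $\partial(x)$ for $x\in X$ contains at most one element of $P$, the corresponding coefficient is $1$, and each element of $P$ appears in at most one $\partial(x)$, $x\in X$. *)

theory Defs
  imports Main
begin

text \<open>Vectors of E(A) are coefficient functions 'a => 'k supported on A. A linear map
  on E(A) is given by its matrix: d a b = <d(a), b>, i.e. the coefficient of the basis
  element b in the image of the basis element a. The linear order on A is the order
  of the type 'a; the grading is deg.\<close>

definition delta :: "'a \<Rightarrow> 'a \<Rightarrow> 'k::zero_neq_one" where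
  "delta c = (\<lambda>b. if b = c then 1 else 0)"

definition M_diff :: "('a::linorder \<Rightarrow> int) \<Rightarrow> 'a set \<Rightarrow> ('a \<Rightarrow> 'a \<Rightarrow> 'k::field) \<Rightarrow> bool" where
  "M_diff deg A d \<longleftrightarrow> finite A
     \<and> (\<forall>a b. d a b \<noteq> 0 \<longrightarrow> a \<in> A \<and> b \<in> A \<and> b < a \<and> deg b = deg a - 1)
     \<and> (\<forall>a\<in>A. \<forall>c\<in>A. (\<Sum>b\<in>A. d a b * d b c) = 0)"

definition M_AB_diff :: "('a::linorder \<Rightarrow> int) \<Rightarrow> 'a set \<Rightarrow> 'a set \<Rightarrow> ('a \<Rightarrow> 'a \<Rightarrow> 'k::field) \<Rightarrow> bool" where
  "M_AB_diff deg A B d \<longleftrightarrow> M_diff deg A d \<and> B \<subseteq> A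
     \<and> (\<forall>b\<in>B. \<forall>a\<in>A - B. d b a = 0)"

text \<open>Restriction of the matrix to S: for S = B this is the restriction to E(B); for
  S = A - B it is the induced differential on E(A)/E(B), identified with E(A - B).\<close>
definition restr :: "'a set \<Rightarrow> ('a \<Rightarrow> 'a \<Rightarrow> 'k::zero) \<Rightarrow> 'a \<Rightarrow> 'a \<Rightarrow> 'k" where
  "restr S d = (\<lambda>a b. if a \<in> S \<and> b \<in> S then d a b else 0)"

definition elementary :: "'a set \<Rightarrow> ('a \<Rightarrow> 'a \<Rightarrow> 'k::field) \<Rightarrow> bool" where
  "elementary S e \<longleftrightarrow>
     (\<forall>a\<in>S. e a = (\<lambda>_. 0) \<or> (\<exists>c\<in>S. e a = delta c))
     \<and> (\<forall>a1\<in>S. \<forall>a2\<in>S. \<forall>c. e a1 = delta c \<and> e a2 = delta c \<longrightarrow> a1 = a2)"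

definition Qset :: "'a set \<Rightarrow> 'a set \<Rightarrow> ('a \<Rightarrow> 'a \<Rightarrow> 'k::field) \<Rightarrow> 'a set" where
  "Qset A B d = {b\<in>B. restr B d b \<noteq> (\<lambda>_. 0)}"
definition Rset :: "'a set \<Rightarrow> 'a set \<Rightarrow> ('a \<Rightarrow> 'a \<Rightarrow> 'k::field) \<Rightarrow> 'a set" where
  "Rset A B d = {c. \<exists>q\<in>Qset A B d. restr B d q = delta c}"
definition Pset :: "'a set \<Rightarrow> 'a set \<Rightarrow> ('a \<Rightarrow> 'a \<Rightarrow> 'k::field) \<Rightarrow> 'a set" where
  "Pset A B d = B - (Qset A B d \<union> Rset A B d)"
definition Yset :: "'a set \<Rightarrow> 'a set \<Rightarrow> ('a \<Rightarrow> 'a \<Rightarrow> 'k::field) \<Rightarrow> 'a set" where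
  "Yset A B d = {a\<in>A - B. restr (A - B) d a \<noteq> (\<lambda>_. 0)}"
definition Zset :: "'a set \<Rightarrow> 'a set \<Rightarrow> ('a \<Rightarrow> 'a \<Rightarrow> 'k::field) \<Rightarrow> 'a set" where
  "Zset A B d = {c. \<exists>y\<in>Yset A B d. restr (A - B) d y = delta c}"
definition Xset :: "'a set \<Rightarrow> 'a set \<Rightarrow> ('a \<Rightarrow> 'a \<Rightarrow> 'k::field) \<Rightarrow> 'a set" where
  "Xset A B d = (A - B) - (Yset A B d \<union> Zset A B d)"

definition quasi_elementary :: "'a set \<Rightarrow> 'a set \<Rightarrow> ('a \<Rightarrow> 'a \<Rightarrow> 'k::field) \<Rightarrow> bool" where
  "quasi_elementary A B d \<longleftrightarrow>
     elementary B (restr B d) \<and> elementary (A - B) (restr (A - B) d)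
     \<and> (\<forall>x\<in>Xset A B d. \<forall>p1\<in>Pset A B d. \<forall>p2\<in>Pset A B d.
           d x p1 \<noteq> 0 \<and> d x p2 \<noteq> 0 \<longrightarrow> p1 = p2)
     \<and> (\<forall>x\<in>Xset A B d. \<forall>p\<in>Pset A B d. d x p \<noteq> 0 \<longrightarrow> d x p = 1)
     \<and> (\<forall>p\<in>Pset A B d. \<forall>x1\<in>Xset A B d. \<forall>x2\<in>Xset A B d.
           d x1 p \<noteq> 0 \<and> d x2 p \<noteq> 0 \<longrightarrow> x1 = x2)"

end

theory Submission
  imports Defs
begin

text \<open>Read off the coefficient of c in \<open>\<partial>(\<partial> y) = 0\<close>. The component of \<open>\<partial> y\<close> in
  E(A - B) is z, so \<open>0 = \<langle>\<partial> z, c\<rangle> + (\<Sum>b\<in>B. \<langle>\<partial> y, b\<rangle> \<langle>\<partial> b, c\<rangle>)\<close>.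
  Since \<open>\<partial>\<close> preserves E(B) and \<open>\<partial>\<^sub>B\<close> is elementary, the only b in B with
  \<open>\<langle>\<partial> b, c\<rangle> \<noteq> 0\<close> is the unique q with \<open>\<partial> q = c\<close>; so the sum is \<open>\<langle>\<partial> y, q\<rangle>\<close>, which
  gives (a), and it vanishes if there is no such q, which gives (b).\<close>

lemma elementary_eq_delta_if_nonzero:
  assumes "elementary S e" and "a \<in> S" and "e a c \<noteq> 0"
  shows "e a = delta c"
proof -
  have "e a = (\<lambda>_. 0) \<or> (\<exists>c'\<in>S. e a = delta c')"
    using assms(1,2) unfolding elementary_def by blast
  then obtain c' where "e a = delta c'"
    using assms(3) by auto
  moreover have "c' = c"
    using assms(3) calculation by (auto simp: delta_def split: if_splits)
  ultimately show ?thesis by simp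
qed

lemma elementary_delta_inj:
  assumes "elementary S e" and "a1 \<in> S" and "a2 \<in> S"
    and "e a1 = delta c" and "e a2 = delta c"
  shows "a1 = a2"
  using assms unfolding elementary_def by blast

lemma M_AB_diff_restr_B:
  assumes "M_AB_diff deg A B d" and "b \<in> B"
  shows "restr B d b = d b"
proof
  fix c
  have "d b c = 0" if "c \<notin> B"
  proof -
    have "\<forall>a\<in>A - B. d b a = 0" and "d b c \<noteq> 0 \<longrightarrow> c \<in> A"
      using assms unfolding M_AB_diff_def M_diff_def by blast+
    then show ?thesis
      using that by blast
  qed
  then show "restr B d b c = d b c"
    using assms(2) by (auto simp: restr_def)
qed

lemma M_AB_diff_row_eq_delta:
  assumes "M_AB_diff deg A B d" and "elementary B (restr B d)"
    and "b \<in> B" and "d b c \<noteq> 0"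
  shows "d b = delta c" and "b \<in> Qset A B d"
proof -
  have row: "restr B d b = d b"
    using assms(1,3) by (rule M_AB_diff_restr_B)
  show "d b = delta c"
    using elementary_eq_delta_if_nonzero[OF assms(2,3)] assms(4) row by simp
  then show "b \<in> Qset A B d"
    using assms(3) row by (auto simp: Qset_def delta_def fun_eq_iff)
qed

lemma M_AB_diff_sum_B_eq_preimage:
  assumes "M_AB_diff deg A B d" and "elementary B (restr B d)"
    and "q \<in> B" and "d q = delta r"
  shows "(\<Sum>b\<in>B. d y b * d b r) = d y q"
proof -
  have "finite B"
    using assms(1) unfolding M_AB_diff_def M_diff_def by (metis finite_subset)
  have "d y b * d b r = (if b = q then d y b else 0)" if "b \<in> B" for b
  proof (cases "d b r = 0")
    case True
    then show ?thesis
      using assms(4) by (auto simp: delta_def)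
  next
    case False
    then have "d b = delta r"
      using M_AB_diff_row_eq_delta(1)[OF assms(1,2) that] by simp
    then have "b = q"
      using elementary_delta_inj[OF assms(2) that assms(3)] assms(3,4) that
        M_AB_diff_restr_B[OF assms(1)] by metis
    then show ?thesis
      using assms(4) by (simp add: delta_def)
  qed
  then show ?thesis
    using \<open>finite B\<close> assms(3) by (simp cong: sum.cong)
qed

lemma M_AB_diff_square_zero_split:
  assumes "M_AB_diff deg A B d" and "y \<in> A - B"
    and "restr (A - B) d y = delta z" and "c \<in> A"
  shows "d z c + (\<Sum>b\<in>B. d y b * d b c) = 0"
proof -
  have "finite A" and "B \<subseteq> A"
    and square: "(\<Sum>a\<in>A. d y a * d a c) = 0"
    using assms(1,2,4) unfolding M_AB_diff_def M_diff_def by auto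
  have "z \<in> A - B"
    using arg_cong[OF assms(3), of "\<lambda>f. f z"] by (auto simp: restr_def delta_def split: if_splits)
  have "d y a = delta z a" if "a \<in> A - B" for a
    using fun_cong[OF assms(3), of a] assms(2) that by (simp add: restr_def)
  then have "(\<Sum>a\<in>A - B. d y a * d a c) = (\<Sum>a\<in>A - B. if a = z then d a c else 0)"
    by (intro sum.cong) (auto simp: delta_def)
  also have "\<dots> = d z c"
    using \<open>z \<in> A - B\<close> \<open>finite A\<close> by simp
  finally have "(\<Sum>a\<in>A - B. d y a * d a c) = d z c" .
  moreover have "(\<Sum>a\<in>A. d y a * d a c) = (\<Sum>a\<in>A - B. d y a * d a c) + (\<Sum>b\<in>B. d y b * d b c)"
    using \<open>finite A\<close> \<open>B \<subseteq> A\<close> by (metis sum.subset_diff)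
  ultimately show ?thesis
    using square by simp
qed

lemma M_AB_diff_coeff_preimage:
  assumes "M_AB_diff deg A B d" and "elementary B (restr B d)"
    and "q \<in> B" and "d q = delta r"
    and "y \<in> A - B" and "restr (A - B) d y = delta z"
  shows "d y q = - d z r"
proof -
  have "r \<in> A"
    using assms(1,4) unfolding M_AB_diff_def M_diff_def by (metis delta_def one_neq_zero)
  then have "d z r + d y q = 0"
    using M_AB_diff_square_zero_split[OF assms(1,5,6), of r] M_AB_diff_sum_B_eq_preimage[OF assms(1-4), of y]
    by simp
  then show ?thesis
    by (simp add: eq_neg_iff_add_eq_0 add.commute)
qed

lemma M_AB_diff_coeff_in_B_has_preimage:
  assumes "M_AB_diff deg A B d" and "elementary B (restr B d)"
    and "y \<in> A - B" and "restr (A - B) d y = delta z"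
    and "b \<in> B" and "d z b \<noteq> 0"
  shows "b \<in> Rset A B d" and "\<exists>q\<in>Qset A B d. d q = delta b \<and> d y q \<noteq> 0"
proof -
  have "b \<in> A"
    using assms(1,5) unfolding M_AB_diff_def by blast
  then have "(\<Sum>c\<in>B. d y c * d c b) \<noteq> 0"
    using M_AB_diff_square_zero_split[OF assms(1,3,4)] assms(6) by (metis add.right_neutral)
  then obtain q where "q \<in> B" and "d y q * d q b \<noteq> 0"
    by (rule sum.not_neutral_contains_not_neutral)
  then have "q \<in> B" and "d y q \<noteq> 0" and "d q b \<noteq> 0"
    by auto
  moreover note M_AB_diff_row_eq_delta[OF assms(1,2) \<open>q \<in> B\<close> \<open>d q b \<noteq> 0\<close>]
  moreover have "restr B d q = d q"
    using assms(1) \<open>q \<in> B\<close> by (rule M_AB_diff_restr_B)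
  ultimately show "b \<in> Rset A B d" and "\<exists>q\<in>Qset A B d. d q = delta b \<and> d y q \<noteq> 0"
    unfolding Rset_def by auto
qed

theorem lemma4p1:
  fixes deg :: "'a::linorder \<Rightarrow> int" and A B :: "'a set" and d :: "'a \<Rightarrow> 'a \<Rightarrow> 'k::field"
  assumes "M_AB_diff deg A B d" and "quasi_elementary A B d"
  shows "(\<forall>q r y z. q \<in> Qset A B d \<and> r \<in> Rset A B d \<and> y \<in> Yset A B d \<and> z \<in> Zset A B d
            \<and> d q = delta r \<and> restr (A - B) d y = delta z
            \<longrightarrow> d y q = - d z r)
       \<and> (\<forall>y z b. y \<in> Yset A B d \<and> z \<in> Zset A B d \<and> restr (A - B) d y = delta z
            \<and> b \<in> B \<and> d z b \<noteq> 0
            \<longrightarrow> b \<in> Rset A B d \<and> (\<exists>q\<in>Qset A B d. d q = delta b \<and> d y q \<noteq> 0))"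
proof -
  have elem: "elementary B (restr B d)"
    using assms(2) unfolding quasi_elementary_def by blast
  show ?thesis
    using M_AB_diff_coeff_preimage[OF assms(1) elem] M_AB_diff_coeff_in_B_has_preimage[OF assms(1) elem]
    by (auto simp: Qset_def Yset_def)
qed

end
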